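(* Fix an integer $k\ge 2$. For all but $O_k(N^{k-1})$ choices of positive integers $n_1<n_2<\cdots<n_k\le N$, the polynomial $F(x)=1+x^{n_1}+\cdots+x^{n_k}$ has exactly one irreducible non-reciprocal factor in $\mathbb{Z}[x]$ (counted with multiplicity, and up to sign); equivalently, the non-reciprocal part of $F(x)$ is irreducible.
   Context: For $f(x)\in\mathbb{R}[x]$ nonzero, its reciprocal is $\tilde f(x)=x^{\deg f}f(1/x)$; $f$ is called reciprocal if $f(x)=\pm\tilde f(x)$ and non-reciprocal otherwise. The non-reciprocal part of $f(x)\in\mathbb{Z}[x]$ is $f(x)$ removed of every irreducible reciprocal factor in $\mathbb{Z}[x]$ having positive leading coefficient (including constant irreducible factors). The implied constant in $O_k$ depends only on $k$. *)

theory Defs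
  imports "HOL-Computational_Algebra.Computational_Algebra"
begin

text \<open>The reciprocal of f is x^(deg f) f(1/x), i.e. the coefficient list reversed,
  which is the library's reflect_poly.\<close>
definition reciprocal :: "int poly \<Rightarrow> bool" where
  "reciprocal f \<longleftrightarrow> f = reflect_poly f \<or> f = - reflect_poly f"

text \<open>Non-reciprocal part: remove from the (normalized, i.e. positive leading coefficient)
  prime = irreducible factorization of f in Z[x] every reciprocal factor (this includes
  all constant irreducible factors), keeping the sign of f.\<close>
definition nonrec_part :: "int poly \<Rightarrow> int poly" where
  "nonrec_part f = unit_factor f *
     prod_mset (filter_mset (\<lambda>p. \<not> reciprocal p) (prime_factorization f))"

definition F_poly :: "nat set \<Rightarrow> int poly" where
  "F_poly S = 1 + (\<Sum>n\<in>S. monom 1 n)"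

end

theory Submission
  imports Defs
begin

text \<open>Write B = {0, n_1, ..., n_k}, so that F is the 0/1 polynomial f supported on B, and call B
  a B_3 set if all sums of three elements of B (repetitions allowed) are distinct.
  For a B_3 set the only polynomials W with W W* = f f* (where * denotes the reciprocal) are
  +-f and +-f*: comparing the middle coefficient and the value at 1 of both sides forces W to be
  +- a 0/1 polynomial with as many terms as f, the differences of its support lie among the
  differences of B, and the B_3 property leaves only B and its mirror image as such supports.
  If f = g h q with g and h non-reciprocal, replacing a non-reciprocal factor of f by its
  reciprocal produces such a W, which forces the complementary factor to be reciprocal. So g q
  and h q are reciprocal, q is not (else g would be), hence g h is reciprocal, and then q^2 and
  with it q is reciprocal after all.
  A violation of the B_3 property is a relation c n_i + (sum of three elements) = (sum of three
  elements) with c in {1, 2, 3} in which n_i does not occur otherwise, so it determines n_i from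
  the other k - 1 elements in O(k^6) ways; hence there are O(k^6 N^(k-1)) exceptional sets.\<close>

section \<open>Polynomials with coefficients 0 and 1\<close>

definition indicator_poly :: "nat set \<Rightarrow> int poly" where
  "indicator_poly B = (\<Sum>b\<in>B. monom 1 b)"

definition reflect_set :: "nat set \<Rightarrow> nat set" where
  "reflect_set B = (\<lambda>b. Max B - b) ` B"

lemma coeff_indicator_poly:
  "finite B \<Longrightarrow> coeff (indicator_poly B) n = (if n \<in> B then 1 else 0)"
  by (simp add: indicator_poly_def coeff_sum coeff_monom)

lemma indicator_poly_inject:
  assumes "finite A" "finite B" "indicator_poly A = indicator_poly B"
  shows "A = B"
proof (rule set_eqI)
  fix n
  have "coeff (indicator_poly A) n = coeff (indicator_poly B) n"
    using assms(3) by simp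
  then show "n \<in> A \<longleftrightarrow> n \<in> B"
    using assms(1,2) by (simp add: coeff_indicator_poly split: if_splits)
qed

lemma indicator_poly_coeffs:
  fixes p :: "int poly"
  assumes "\<forall>i. coeff p i = 0 \<or> coeff p i = 1"
  shows "p = indicator_poly {i. coeff p i = 1}"
proof -
  have "{i. coeff p i = 1} \<subseteq> {..degree p}"
    by (auto intro: le_degree)
  then have "finite {i. coeff p i = 1}"
    using finite_subset by blast
  then show ?thesis
    using assms by (intro poly_eqI) (auto simp: coeff_indicator_poly)
qed

lemma F_poly_eq_indicator_poly:
  "finite S \<Longrightarrow> 0 \<notin> S \<Longrightarrow> F_poly S = indicator_poly (insert 0 S)"
  by (simp add: F_poly_def indicator_poly_def monom_0 one_pCons)

lemma degree_indicator_poly: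
  assumes "finite B" "B \<noteq> {}"
  shows "degree (indicator_poly B) = Max B"
proof (rule antisym)
  show "degree (indicator_poly B) \<le> Max B"
    by (rule degree_le) (use assms in \<open>auto simp: coeff_indicator_poly\<close>)
  show "Max B \<le> degree (indicator_poly B)"
    by (rule le_degree) (use assms in \<open>auto simp: coeff_indicator_poly\<close>)
qed

lemma poly_indicator_poly_1: "poly (indicator_poly B) 1 = int (card B)"
  by (simp add: indicator_poly_def poly_sum poly_monom)

lemma sum_coeff_indicator_poly_squared:
  assumes "finite B" "B \<noteq> {}"
  shows "(\<Sum>i\<le>Max B. (coeff (indicator_poly B) i)^2) = int (card B)"
proof -
  have "(\<Sum>i\<le>Max B. (coeff (indicator_poly B) i)^2) = (\<Sum>i\<le>Max B. coeff (indicator_poly B) i)"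
    using assms(1) by (intro sum.cong) (auto simp: coeff_indicator_poly)
  also have "\<dots> = poly (indicator_poly B) 1"
    by (simp add: poly_altdef degree_indicator_poly[OF assms])
  finally show ?thesis
    by (simp add: poly_indicator_poly_1)
qed

lemma finite_reflect_set: "finite B \<Longrightarrow> finite (reflect_set B)"
  by (simp add: reflect_set_def)

lemma mem_reflect_set_iff:
  assumes "finite B" "B \<noteq> {}"
  shows "n \<in> reflect_set B \<longleftrightarrow> n \<le> Max B \<and> Max B - n \<in> B"
proof
  assume "n \<in> reflect_set B"
  then obtain b where "b \<in> B" "n = Max B - b"
    by (auto simp: reflect_set_def)
  moreover have "b \<le> Max B"
    using \<open>b \<in> B\<close> assms by simp
  ultimately show "n \<le> Max B \<and> Max B - n \<in> B"
    by (simp add: diff_diff_cancel)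
next
  assume n: "n \<le> Max B \<and> Max B - n \<in> B"
  then have "n = Max B - (Max B - n)"
    by simp
  then show "n \<in> reflect_set B"
    unfolding reflect_set_def using n by blast
qed

lemma reflect_indicator_poly:
  assumes "finite B" "B \<noteq> {}"
  shows "reflect_poly (indicator_poly B) = indicator_poly (reflect_set B)"
proof (rule poly_eqI)
  fix n
  show "coeff (reflect_poly (indicator_poly B)) n = coeff (indicator_poly (reflect_set B)) n"
    unfolding coeff_reflect_poly coeff_indicator_poly[OF finite_reflect_set[OF assms(1)]]
      coeff_indicator_poly[OF assms(1)] degree_indicator_poly[OF assms] mem_reflect_set_iff[OF assms]
    by auto
qed

lemma coeff_indicator_poly_mult_neq_0_iff:
  assumes "finite A" "finite C"
  shows "coeff (indicator_poly A * indicator_poly C) n \<noteq> 0 \<longleftrightarrow> (\<exists>a\<in>A. \<exists>c\<in>C. a + c = n)"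
proof -
  have "coeff (indicator_poly A * indicator_poly C) n
      = (\<Sum>a\<in>A. \<Sum>c\<in>C. if a + c = n then 1 else 0)"
    by (simp add: indicator_poly_def sum_product mult_monom coeff_sum coeff_monom)
  also have "\<dots> = 0 \<longleftrightarrow> (\<forall>a\<in>A. (\<Sum>c\<in>C. (if a + c = n then 1 else 0 :: int)) = 0)"
    using assms by (intro sum_nonneg_eq_0_iff) (auto intro: sum_nonneg)
  also have "\<dots> \<longleftrightarrow> (\<forall>a\<in>A. \<forall>c\<in>C. a + c \<noteq> n)"
    using assms by (simp add: sum_nonneg_eq_0_iff)
  finally show ?thesis
    by blast
qed

lemma coeff_mult_reflect_poly_degree:
  "coeff (p * reflect_poly p) (degree p) = (\<Sum>i\<le>degree p. (coeff p i)^2)"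
  for p :: "'a::comm_semiring_1 poly"
  unfolding coeff_mult coeff_reflect_poly
  by (intro sum.cong) (auto simp: power2_eq_square)

lemma poly_reflect_poly_1:
  fixes p :: "'a::comm_semiring_1 poly"
  assumes "coeff p 0 \<noteq> 0"
  shows "poly (reflect_poly p) 1 = poly p 1"
proof -
  have "poly (reflect_poly p) 1 = (\<Sum>i\<le>degree p. coeff p (degree p - i))"
    using assms by (simp add: poly_altdef coeff_reflect_poly)
  also have "\<dots> = (\<Sum>i\<le>degree p. coeff p i)"
    using sum.atLeastAtMost_rev[of "coeff p" 0 "degree p"] by (simp add: atMost_atLeast0)
  finally show ?thesis
    by (simp add: poly_altdef)
qed

lemma reflect_poly_uminus: "reflect_poly (- p) = - reflect_poly p"
  for p :: "'a::comm_ring_1 poly"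
  by (rule poly_eqI) (simp add: coeff_reflect_poly)

section \<open>B_3 sets and their difference sets\<close>

definition B3_set :: "nat set \<Rightarrow> bool" where
  "B3_set B \<longleftrightarrow> (\<forall>X Y. set_mset X \<subseteq> B \<longrightarrow> set_mset Y \<subseteq> B \<longrightarrow> size X = 3 \<longrightarrow> size Y = 3
      \<longrightarrow> sum_mset X = sum_mset Y \<longrightarrow> X = Y)"

lemma B3_setD:
  assumes "B3_set B" "x1 \<in> B" "x2 \<in> B" "x3 \<in> B" "y1 \<in> B" "y2 \<in> B" "y3 \<in> B"
    and "x1 + x2 + x3 = y1 + y2 + y3"
  shows "{#x1, x2, x3#} = {#y1, y2, y3#}"
proof -
  have "set_mset {#x1, x2, x3#} \<subseteq> B" "set_mset {#y1, y2, y3#} \<subseteq> B"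
    using assms(2-7) by auto
  moreover have "sum_mset {#x1, x2, x3#} = sum_mset {#y1, y2, y3#}"
    using assms(8) by (simp add: algebra_simps)
  ultimately show ?thesis
    using assms(1) unfolding B3_set_def by (simp add: numeral_3_eq_3)
qed

lemma add_mset3_eq_cases:
  fixes p q p' q' r s :: nat
  assumes eq: "{#p, q', s#} = {#p', q, r#}" and "p \<noteq> q" "p' \<noteq> q'"
  shows "p = p' \<or> q = q'"
proof (rule ccontr)
  assume c: "\<not> (p = p' \<or> q = q')"
  have "p \<in># {#p', q, r#}" "q' \<in># {#p', q, r#}"
    using eq[symmetric] by simp_all
  then have "p = r" "q' = r"
    using assms(2,3) c by auto
  then have "{#r, s#} = {#p', q#}"
    using eq by (simp add: add_mset_commute)
  then have "r \<in># {#p', q#}"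
    by (metis union_single_eq_member)
  then show False
    using \<open>p = r\<close> \<open>q' = r\<close> assms(2,3) c by auto
qed

lemma reflect_set_neq_if_B3_set:
  assumes "finite B" "0 \<in> B" "3 \<le> card B" "B3_set B"
  shows "reflect_set B \<noteq> B"
proof
  assume sym: "reflect_set B = B"
  define m where "m = Max B"
  have "m \<in> B"
    using assms(1,2) by (auto simp: m_def intro!: Max_in)
  have "\<not> B \<subseteq> {0, m}"
    using card_mono[of "{0, m}" B] assms(3) by (auto simp: card_insert_if split: if_splits)
  then obtain b where b: "b \<in> B" "b \<noteq> 0" "b \<noteq> m"
    by blast
  then have "b \<le> m" "m - b \<in> B"
    using sym mem_reflect_set_iff[of B b] assms(1,2) by (auto simp: m_def)
  then have "{#b, m - b, 0#} = {#m, 0, 0#}"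
    using B3_setD[OF assms(4) b(1) _ assms(2) \<open>m \<in> B\<close> assms(2) assms(2)] by simp
  then have "b \<in># {#m, 0, 0#}"
    by (metis union_single_eq_member)
  then show False
    using b by simp
qed

lemma const_on_if_pairwise_agree:
  assumes "\<forall>a\<in>A. \<forall>a'\<in>A. a \<noteq> a' \<longrightarrow> P a = P a' \<or> Q a = Q a'"
  shows "(\<exists>\<pi>. \<forall>a\<in>A. P a = \<pi>) \<or> (\<exists>\<theta>. \<forall>a\<in>A. Q a = \<theta>)"
proof (rule disjCI)
  assume "\<not> (\<exists>\<theta>. \<forall>a\<in>A. Q a = \<theta>)"
  then obtain a b where ab: "a \<in> A" "b \<in> A" "Q a \<noteq> Q b"
    by metis
  then have Pab: "P a = P b"
    using assms by metis
  have "P c = P a" if "c \<in> A" for c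
  proof (rule ccontr)
    assume "P c \<noteq> P a"
    then have "Q c = Q a" "Q c = Q b"
      using assms ab that Pab by metis+
    then show False
      using ab by simp
  qed
  then show "\<exists>\<pi>. \<forall>a\<in>A. P a = \<pi>"
    by blast
qed

lemma B3_set_common_endpoint:
  assumes "B3_set B" "p \<in> B" "q \<in> B" "p' \<in> B" "q' \<in> B" "r \<in> B" "s \<in> B"
    and "q < p" "q' < p'" "(int p - int q) - (int p' - int q') = int r - int s"
  shows "p = p' \<or> q = q'"
proof -
  have "p + q' + s = p' + q + r"
    using assms(10) by linarith
  then have "{#p, q', s#} = {#p', q, r#}"
    by (rule B3_setD[OF assms(1,2,5,7,4,3,6)])
  then show ?thesis
    by (rule add_mset3_eq_cases) (use assms(8,9) in simp_all)
qed

lemma eq_if_differences_from: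
  fixes A B :: "nat set"
  assumes "finite A" "finite B" "card A = card B" "0 \<in> B" "\<theta> \<in> B"
    and "\<forall>a\<in>A - {0}. \<exists>b\<in>B. int a = int b - int \<theta>"
  shows "A = B"
proof -
  have into: "a + \<theta> \<in> B" if "a \<in> A" for a
  proof (cases "a = 0")
    case False
    then have "\<exists>b\<in>B. int a = int b - int \<theta>"
      using assms(6) that by simp
    then obtain b where "b \<in> B" "int a = int b - int \<theta>"
      by blast
    moreover from this(2) have "a + \<theta> = b"
      by linarith
    ultimately show ?thesis
      by simp
  qed (simp add: assms(5))
  have "inj_on (\<lambda>a. a + \<theta>) A"
    by (rule inj_onI) simp
  then have "card ((\<lambda>a. a + \<theta>) ` A) = card B"
    using assms(3) by (simp add: card_image)
  then have img: "(\<lambda>a. a + \<theta>) ` A = B"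
    using assms(2) into by (intro card_subset_eq) auto
  then have "\<theta> = 0"
    using assms(4) by fastforce
  then show ?thesis
    using img by simp
qed

lemma eq_reflect_set_if_differences_to:
  assumes "finite A" "finite B" "card A = card B" "0 \<in> A" "\<pi> \<in> B"
    and "\<forall>a\<in>A - {0}. \<exists>b\<in>B. int a = int \<pi> - int b"
  shows "A = reflect_set B"
proof -
  have into: "a \<le> \<pi> \<and> \<pi> - a \<in> B" if "a \<in> A" for a
  proof (cases "a = 0")
    case False
    then have "\<exists>b\<in>B. int a = int \<pi> - int b"
      using assms(6) that by simp
    then obtain b where "b \<in> B" "int a = int \<pi> - int b"
      by blast
    moreover from this(2) have "a \<le> \<pi>" "\<pi> - a = b"
      by linarith+
    ultimately show ?thesis
      by simp
  qed (simp add: assms(5))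
  have "inj_on (\<lambda>a. \<pi> - a) A"
    using into by (intro inj_onI) (metis diff_diff_cancel)
  then have "card ((\<lambda>a. \<pi> - a) ` A) = card B"
    using assms(3) by (simp add: card_image)
  then have img: "(\<lambda>a. \<pi> - a) ` A = B"
    using assms(2) into by (intro card_subset_eq) auto
  then have "Max B = \<pi>"
    using assms(2,5) by (intro Max_eqI) auto
  then have "reflect_set B = (\<lambda>a. \<pi> - (\<pi> - a)) ` A"
    by (simp add: reflect_set_def img[symmetric] image_image)
  also have "\<dots> = (\<lambda>a. a) ` A"
    using into by (intro image_cong) auto
  finally show ?thesis
    by simp
qed

lemma eq_or_reflect_set_if_differences_subset:
  assumes fA: "finite A" and fB: "finite B" and A0: "0 \<in> A" and B0: "0 \<in> B"
    and card_eq: "card A = card B" and card_B: "2 \<le> card B" and B3: "B3_set B"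
    and diff: "\<forall>a1\<in>A. \<forall>a2\<in>A. \<exists>b1\<in>B. \<exists>b2\<in>B. int a1 - int a2 = int b1 - int b2"
  shows "A = B \<or> A = reflect_set B"
proof -
  define A' where "A' = A - {0}"
  have "\<forall>a\<in>A'. \<exists>p q. p \<in> B \<and> q \<in> B \<and> int a = int p - int q"
    using diff A0 by (fastforce simp: A'_def)
  then obtain P Q where PQ: "\<And>a. a \<in> A' \<Longrightarrow> P a \<in> B \<and> Q a \<in> B \<and> int a = int (P a) - int (Q a)"
    by metis
  have Q_less_P: "Q a < P a" if "a \<in> A'" for a
    using PQ[OF that] that by (auto simp: A'_def)
  have "\<forall>a\<in>A'. \<forall>a'\<in>A'. a \<noteq> a' \<longrightarrow> P a = P a' \<or> Q a = Q a'"
  proof (intro ballI impI)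
    fix a a' assume a: "a \<in> A'" "a' \<in> A'" "a \<noteq> a'"
    from diff a(1,2) obtain r s where rs: "r \<in> B" "s \<in> B" "int a - int a' = int r - int s"
      unfolding A'_def by blast
    have "(int (P a) - int (Q a)) - (int (P a') - int (Q a')) = int r - int s"
      using rs(3) PQ[OF a(1)] PQ[OF a(2)] by linarith
    then show "P a = P a' \<or> Q a = Q a'"
      using B3_set_common_endpoint[OF B3 _ _ _ _ rs(1,2) Q_less_P[OF a(1)] Q_less_P[OF a(2)]]
        PQ[OF a(1)] PQ[OF a(2)] by blast
  qed
  then consider \<pi> where "\<forall>a\<in>A'. P a = \<pi>" | \<theta> where "\<forall>a\<in>A'. Q a = \<theta>"
    using const_on_if_pairwise_agree by blast
  moreover have "A' \<noteq> {}"
  proof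
    assume "A' = {}"
    then have "A = {0}"
      using A0 by (auto simp: A'_def)
    then show False
      using card_eq card_B by simp
  qed
  then obtain a0 where a0: "a0 \<in> A'"
    by blast
  ultimately show ?thesis
  proof cases
    case 1
    have "\<pi> \<in> B" "\<forall>a\<in>A'. \<exists>b\<in>B. int a = int \<pi> - int b"
      using PQ 1 a0 by force+
    then show ?thesis
      using eq_reflect_set_if_differences_to[OF fA fB card_eq A0] by (simp add: A'_def)
  next
    case 2
    have "\<theta> \<in> B" "\<forall>a\<in>A'. \<exists>b\<in>B. int a = int b - int \<theta>"
      using PQ 2 a0 by force+
    then show ?thesis
      using eq_if_differences_from[OF fA fB card_eq B0] by (simp add: A'_def)
  qed
qed

section \<open>Polynomials W with W W* = f f* for a B_3 set\<close>

definition reflect_rigid :: "int poly \<Rightarrow> bool" where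
  "reflect_rigid f \<longleftrightarrow> (\<forall>W. W * reflect_poly W = f * reflect_poly f \<longrightarrow>
     W = f \<or> W = - f \<or> W = reflect_poly f \<or> W = - reflect_poly f)"

lemma abs_le_power2: "\<bar>x\<bar> \<le> x^2" for x :: int
proof (cases "x = 0")
  case False
  then have "\<bar>x\<bar> * 1 \<le> \<bar>x\<bar> * \<bar>x\<bar>"
    by (intro mult_left_mono) auto
  then show ?thesis
    by (simp add: power2_eq_square abs_mult[symmetric])
qed simp

lemma abs_eq_power2_imp: "\<bar>x\<bar> = x^2 \<Longrightarrow> x \<in> {0, 1, -1}" for x :: int
proof -
  assume "\<bar>x\<bar> = x^2"
  then have "\<bar>x\<bar> * \<bar>x\<bar> = \<bar>x\<bar> * 1"
    by (metis abs_mult_self_eq power2_eq_square mult_1_right)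
  then have "\<bar>x\<bar> = 0 \<or> \<bar>x\<bar> = 1"
    by (metis mult_left_cancel)
  then show ?thesis
    by auto
qed

lemma zero_one_if_sum_power2_eq:
  fixes w :: "'a \<Rightarrow> int"
  assumes fin: "finite I" and sq: "(\<Sum>i\<in>I. (w i)^2) = n" and lin: "(\<Sum>i\<in>I. w i)^2 = n^2"
  shows "(\<forall>i\<in>I. w i \<in> {0, 1}) \<or> (\<forall>i\<in>I. w i \<in> {0, -1})"
proof -
  \<comment> \<open>the chain |\<Sum> w| \<le> \<Sum> |w| \<le> \<Sum> w^2 = n = |\<Sum> w| consists of equalities\<close>
  have "0 \<le> n"
    using sq by (metis sum_nonneg zero_le_power2)
  then have abs_sum: "\<bar>\<Sum>i\<in>I. w i\<bar> = n"
    using lin by (metis abs_of_nonneg power2_abs power2_eq_iff_nonneg abs_ge_zero)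
  have "\<bar>\<Sum>i\<in>I. w i\<bar> \<le> (\<Sum>i\<in>I. \<bar>w i\<bar>)"
    by (rule sum_abs)
  moreover have "(\<Sum>i\<in>I. \<bar>w i\<bar>) \<le> (\<Sum>i\<in>I. (w i)^2)"
    by (intro sum_mono abs_le_power2)
  ultimately have sum_abs: "(\<Sum>i\<in>I. \<bar>w i\<bar>) = n" "(\<Sum>i\<in>I. \<bar>w i\<bar>) = (\<Sum>i\<in>I. (w i)^2)"
    using abs_sum sq by linarith+
  have unit: "w i \<in> {0, 1, -1}" if "i \<in> I" for i
    using sum_mono_inv[OF sum_abs(2) abs_le_power2 that fin] by (rule abs_eq_power2_imp)
  consider "(\<Sum>i\<in>I. w i) = (\<Sum>i\<in>I. \<bar>w i\<bar>)" | "(\<Sum>i\<in>I. - w i) = (\<Sum>i\<in>I. \<bar>w i\<bar>)"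
    using abs_sum sum_abs(1) by (auto simp: sum_negf abs_if split: if_splits)
  then show ?thesis
  proof cases
    case 1
    then have "w i = \<bar>w i\<bar>" if "i \<in> I" for i
      using sum_mono_inv[OF 1 _ that fin] by simp
    then show ?thesis
      using unit by fastforce
  next
    case 2
    then have "- w i = \<bar>w i\<bar>" if "i \<in> I" for i
      using sum_mono_inv[OF 2 _ that fin] by simp
    then show ?thesis
      using unit by fastforce
  qed
qed

lemma mult_reflect_poly_eq_invariants:
  fixes W f :: "'a::idom poly"
  assumes eq: "W * reflect_poly W = f * reflect_poly f" and f0: "coeff f 0 \<noteq> 0"
  shows "coeff W 0 \<noteq> 0" "degree W = degree f"
    "(\<Sum>i\<le>degree f. (coeff W i)^2) = (\<Sum>i\<le>degree f. (coeff f i)^2)"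
    "poly W 1 * poly W 1 = poly f 1 * poly f 1"
proof -
  have "coeff W 0 * lead_coeff W = coeff f 0 * lead_coeff f"
    using arg_cong[OF eq, of "\<lambda>p. coeff p 0"] by (simp add: coeff_mult_0)
  moreover have "f \<noteq> 0"
    using f0 by auto
  ultimately show W0: "coeff W 0 \<noteq> 0"
    using f0 by auto
  then have "W \<noteq> 0"
    by auto
  then show deg: "degree W = degree f"
    using arg_cong[OF eq, of degree] W0 f0 \<open>f \<noteq> 0\<close> by (simp add: degree_mult_eq)
  have "(\<Sum>i\<le>degree f. (coeff W i)^2) = coeff (W * reflect_poly W) (degree W)"
    using coeff_mult_reflect_poly_degree[of W] deg by simp
  also have "\<dots> = coeff (f * reflect_poly f) (degree f)"
    using eq deg by simp
  finally show "(\<Sum>i\<le>degree f. (coeff W i)^2) = (\<Sum>i\<le>degree f. (coeff f i)^2)"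
    by (simp add: coeff_mult_reflect_poly_degree)
  show "poly W 1 * poly W 1 = poly f 1 * poly f 1"
    using arg_cong[OF eq, of "\<lambda>p. poly p 1"] W0 f0 by (simp add: poly_reflect_poly_1)
qed

lemma indicator_poly_if_mult_reflect_eq:
  fixes W :: "int poly"
  assumes fB: "finite B" and B0: "0 \<in> B"
    and eq: "W * reflect_poly W = indicator_poly B * reflect_poly (indicator_poly B)"
  obtains A where "finite A" "0 \<in> A" "Max A = Max B" "card A = card B"
    "W = indicator_poly A \<or> W = - indicator_poly A"
proof -
  define m where "m = Max B"
  have B_ne: "B \<noteq> {}"
    using B0 by auto
  have deg_f: "degree (indicator_poly B) = m" and "coeff (indicator_poly B) 0 \<noteq> 0"
    using fB B0 B_ne by (simp_all add: m_def coeff_indicator_poly degree_indicator_poly)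
  note inv = mult_reflect_poly_eq_invariants[OF eq this(2), unfolded deg_f]
  have sq: "(\<Sum>i\<le>m. (coeff W i)^2) = int (card B)"
    using inv(3) sum_coeff_indicator_poly_squared[OF fB B_ne] by (simp add: m_def)
  have "(\<Sum>i\<le>m. coeff W i)^2 = (int (card B))^2"
    using inv(2,4) by (simp add: poly_altdef[of W] poly_indicator_poly_1 power2_eq_square)
  then have "(\<forall>i\<le>m. coeff W i = 0 \<or> coeff W i = 1) \<or> (\<forall>i\<le>m. coeff (- W) i = 0 \<or> coeff (- W) i = 1)"
    using zero_one_if_sum_power2_eq[OF _ sq] by auto
  then obtain V where V: "V = W \<or> V = - W" and V01: "\<forall>i\<le>m. coeff V i = 0 \<or> coeff V i = 1"
    by blast
  have deg_V: "degree V = m" and V0: "coeff V 0 \<noteq> 0"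
    using V inv(1,2) by auto
  define A where "A = {i. coeff V i = 1}"
  have V_eq: "V = indicator_poly A"
    unfolding A_def using V01 deg_V by (intro indicator_poly_coeffs) (metis coeff_eq_0 not_le)
  have A_le: "A \<subseteq> {..m}"
    using deg_V by (auto simp: A_def intro: le_degree)
  then have fA: "finite A"
    using finite_subset by blast
  have "coeff V m \<noteq> 0"
    using deg_V V0 by auto
  then have A0: "0 \<in> A" and Max_A: "Max A = m"
    using V0 V01 A_le fA by (auto simp: A_def intro!: Max_eqI)
  have "int (card A) = (\<Sum>i\<le>m. (coeff V i)^2)"
    using sum_coeff_indicator_poly_squared[OF fA] A0 Max_A V_eq by force
  also have "\<dots> = int (card B)"
    using V sq by auto
  finally show ?thesis
    using that[OF fA A0] Max_A V V_eq by (auto simp: m_def)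
qed

lemma differences_subset_if_mult_reflect_eq:
  assumes fA: "finite A" and fB: "finite B" and "A \<noteq> {}" "B \<noteq> {}" and Max_eq: "Max A = Max B"
    and eq: "indicator_poly A * reflect_poly (indicator_poly A)
      = indicator_poly B * reflect_poly (indicator_poly B)"
    and a: "a1 \<in> A" "a2 \<in> A"
  shows "\<exists>b1\<in>B. \<exists>b2\<in>B. int a1 - int a2 = int b1 - int b2"
proof -
  define m where "m = Max A"
  have "a2 \<le> m" "m - a2 \<in> reflect_set A"
    using a fA by (auto simp: m_def mem_reflect_set_iff[OF fA \<open>A \<noteq> {}\<close>] diff_diff_cancel)
  then have "\<exists>a\<in>A. \<exists>c\<in>reflect_set A. a + c = a1 + (m - a2)"
    using a by blast
  then have "coeff (indicator_poly A * indicator_poly (reflect_set A)) (a1 + (m - a2)) \<noteq> 0"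
    using fA by (simp add: coeff_indicator_poly_mult_neq_0_iff finite_reflect_set)
  then have "coeff (indicator_poly B * indicator_poly (reflect_set B)) (a1 + (m - a2)) \<noteq> 0"
    using eq by (simp add: reflect_indicator_poly assms(1-4))
  then obtain b1 b2' where "b1 \<in> B" "b2' \<in> reflect_set B" "b1 + b2' = a1 + (m - a2)"
    using fB by (subst (asm) coeff_indicator_poly_mult_neq_0_iff) (auto simp: finite_reflect_set)
  moreover obtain b2 where "b2 \<in> B" "b2 \<le> m" "b2' = m - b2"
    using \<open>b2' \<in> reflect_set B\<close> fB \<open>B \<noteq> {}\<close> Max_eq
    by (auto simp: reflect_set_def m_def)
  ultimately show ?thesis
    using \<open>a2 \<le> m\<close> by (intro bexI[of _ b1] bexI[of _ b2]) auto
qed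

lemma reflect_rigid_indicator_poly_if_B3_set:
  assumes fB: "finite B" and B0: "0 \<in> B" and card_B: "2 \<le> card B" and B3: "B3_set B"
  shows "reflect_rigid (indicator_poly B)"
  unfolding reflect_rigid_def
proof (intro allI impI)
  fix W assume eq: "W * reflect_poly W = indicator_poly B * reflect_poly (indicator_poly B)"
  have B_ne: "B \<noteq> {}"
    using B0 by auto
  obtain A where A: "finite A" "0 \<in> A" "Max A = Max B" "card A = card B"
    and W: "W = indicator_poly A \<or> W = - indicator_poly A"
    using indicator_poly_if_mult_reflect_eq[OF fB B0 eq] .
  have "indicator_poly A * reflect_poly (indicator_poly A)
      = indicator_poly B * reflect_poly (indicator_poly B)"
    using eq W by (auto simp: reflect_poly_uminus)
  then have "A = B \<or> A = reflect_set B"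
    using A B0 fB by (intro eq_or_reflect_set_if_differences_subset[OF A(1) fB A(2) B0 A(4) card_B B3]
        ballI differences_subset_if_mult_reflect_eq) auto
  then show "W = indicator_poly B \<or> W = - indicator_poly B
    \<or> W = reflect_poly (indicator_poly B) \<or> W = - reflect_poly (indicator_poly B)"
    using W reflect_indicator_poly[OF fB B_ne] by auto
qed

section \<open>Reciprocal polynomials and rigidity\<close>

lemma eq_or_eq_neg_cancel_right:
  fixes a b c :: "'a::idom"
  assumes "c \<noteq> 0" "a * c = b * c \<or> a * c = - (b * c)"
  shows "a = b \<or> a = - b"
  using assms by (metis minus_mult_left mult_cancel_right)

lemma eq_or_eq_neg_cancel_left:
  fixes a b c :: "'a::idom"
  assumes "c \<noteq> 0" "c * a = c * b \<or> c * a = - (c * b)"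
  shows "a = b \<or> a = - b"
  using assms by (metis minus_mult_right mult_cancel_left)

lemma reciprocal_iff: "reciprocal p \<longleftrightarrow> reflect_poly p = p \<or> reflect_poly p = - p"
  unfolding reciprocal_def by (metis minus_minus)

lemma reciprocal_const: "reciprocal [:c:]"
  by (simp add: reciprocal_iff)

lemma reciprocal_mult: "reciprocal p \<Longrightarrow> reciprocal q \<Longrightarrow> reciprocal (p * q)"
  by (auto simp: reciprocal_iff reflect_poly_mult)

lemma reciprocal_prod_mset: "(\<And>p. p \<in># M \<Longrightarrow> reciprocal p) \<Longrightarrow> reciprocal (prod_mset M)"
proof (induction M)
  case empty
  then show ?case
    by (simp add: reciprocal_iff)
next
  case (add x M)
  then show ?case
    by (simp add: reciprocal_mult)
qed

lemma reciprocal_mult_cancel_right: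
  assumes "reciprocal (p * q)" "reciprocal q" "q \<noteq> 0"
  shows "reciprocal p"
proof -
  from assms(2) consider "reflect_poly q = q" | "reflect_poly q = - q"
    by (auto simp: reciprocal_iff)
  then have "reflect_poly p * q = p * q \<or> reflect_poly p * q = - (p * q)"
    using assms(1) by cases (auto simp: reciprocal_iff reflect_poly_mult)
  then show ?thesis
    using eq_or_eq_neg_cancel_right[OF assms(3)] by (auto simp: reciprocal_iff)
qed

lemma reciprocal_square:
  assumes "reciprocal (p * p)"
  shows "reciprocal p"
proof (cases "p = 0")
  case False
  from assms consider "reflect_poly p * reflect_poly p = p * p"
    | "reflect_poly p * reflect_poly p = - (p * p)"
    by (auto simp: reciprocal_iff reflect_poly_mult)
  then show ?thesis
  proof cases
    case 1
    then show ?thesis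
      by (simp add: reciprocal_iff square_eq_iff)
  next
    case 2
    define l l' where "l = lead_coeff p" and "l' = lead_coeff (reflect_poly p)"
    have "l'^2 = - (l^2)"
      using arg_cong[OF 2, of lead_coeff]
      by (simp add: l_def l'_def lead_coeff_mult lead_coeff_minus power2_eq_square)
    moreover have "0 < l^2"
      using False by (simp add: l_def)
    moreover have "0 \<le> l'^2"
      by simp
    ultimately show ?thesis
      by linarith
  qed
qed (simp add: reciprocal_iff)

lemma reciprocal_cofactor_if_reflect_rigid:
  assumes rigid: "reflect_rigid f" and f: "f = g * q" and f0: "coeff f 0 \<noteq> 0"
    and g: "\<not> reciprocal g"
  shows "reciprocal q"
proof -
  have g0: "coeff g 0 \<noteq> 0" and "q \<noteq> 0"
    using f0 by (auto simp: f coeff_mult_0)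
  then have "reflect_poly g \<noteq> 0"
    by auto
  have "(reflect_poly g * q) * reflect_poly (reflect_poly g * q) = f * reflect_poly f"
    using g0 by (simp add: f reflect_poly_mult mult_ac)
  from rigid[unfolded reflect_rigid_def, rule_format, OF this]
  consider "reflect_poly g * q = g * q \<or> reflect_poly g * q = - (g * q)"
    | "reflect_poly g * q = reflect_poly g * reflect_poly q
        \<or> reflect_poly g * q = - (reflect_poly g * reflect_poly q)"
    by (auto simp: f reflect_poly_mult)
  then show ?thesis
  proof cases
    case 1
    then show ?thesis
      using eq_or_eq_neg_cancel_right[OF \<open>q \<noteq> 0\<close>] g by (auto simp: reciprocal_iff)
  next
    case 2
    then show ?thesis
      using eq_or_eq_neg_cancel_left[OF \<open>reflect_poly g \<noteq> 0\<close>] by (auto simp: reciprocal_def)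
  qed
qed

lemma not_reflect_rigid_if_two_nonreciprocal_factors:
  assumes f: "f = g * h * q" and f0: "coeff f 0 \<noteq> 0"
    and g: "\<not> reciprocal g" and h: "\<not> reciprocal h"
  shows "\<not> reflect_rigid f"
proof
  assume rigid: "reflect_rigid f"
  have "g * h \<noteq> 0" "q \<noteq> 0"
    using f0 f by auto
  have hq: "reciprocal (h * q)"
    using reciprocal_cofactor_if_reflect_rigid[OF rigid _ f0 g] f by (simp add: mult.assoc)
  have gq: "reciprocal (g * q)"
    using reciprocal_cofactor_if_reflect_rigid[OF rigid _ f0 h] f by (simp add: mult_ac)
  have q: "\<not> reciprocal q"
    using reciprocal_mult_cancel_right[OF gq _ \<open>q \<noteq> 0\<close>] g by blast
  have gh: "reciprocal (g * h)"
    using reciprocal_cofactor_if_reflect_rigid[OF rigid f f0] q by blast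
  have "reciprocal ((q * q) * (g * h))"
    using reciprocal_mult[OF hq gq] by (simp add: mult_ac)
  then have "reciprocal q"
    using reciprocal_mult_cancel_right[OF _ gh \<open>g * h \<noteq> 0\<close>] reciprocal_square by blast
  then show False
    using q by contradiction
qed

lemma prime_decomposition_int_poly:
  "unit_factor f * prod_mset (prime_factorization f) = f" for f :: "int poly"
proof (cases "f = 0")
  case False
  have "normalize (prod_mset (prime_factorization f)) = prod_mset (prime_factorization f)"
    by (intro normalized_prod_msetI) (metis in_prime_factors_imp_prime normalize_prime)
  then show ?thesis
    using prod_mset_prime_factorization_weak[OF False] unit_factor_mult_normalize[of f] by simp
qed simp

lemma nonrec_part_mult_reciprocal_part:
  "nonrec_part f * prod_mset (filter_mset reciprocal (prime_factorization f)) = f"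
proof -
  have "prod_mset (prime_factorization f)
      = prod_mset (filter_mset (\<lambda>p. \<not> reciprocal p) (prime_factorization f))
        * prod_mset (filter_mset reciprocal (prime_factorization f))"
    by (metis multiset_partition prod_mset.union mult.commute)
  then show ?thesis
    using prime_decomposition_int_poly[of f] by (simp add: nonrec_part_def mult.assoc)
qed

lemma irreducible_nonrec_part_if_reflect_rigid:
  assumes rigid: "reflect_rigid f" and f0: "coeff f 0 \<noteq> 0" and nonrec: "\<not> reciprocal f"
  shows "irreducible (nonrec_part f)"
proof -
  define P where "P = filter_mset (\<lambda>p. \<not> reciprocal p) (prime_factorization f)"
  define r where "r = unit_factor f * prod_mset (filter_mset reciprocal (prime_factorization f))"
  have f_eq: "f = prod_mset P * r"
    using nonrec_part_mult_reciprocal_part[of f] by (simp add: nonrec_part_def P_def r_def mult_ac)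
  have "reciprocal r"
    unfolding r_def unit_factor_poly_def
    by (intro reciprocal_mult reciprocal_const reciprocal_prod_mset) simp
  have "f \<noteq> 0"
    using f0 by auto
  have P: "prime g" "\<not> reciprocal g" if "g \<in># P" for g
    using that by (auto simp: P_def in_prime_factors_imp_prime)
  consider "P = {#}" | g where "P = {#g#}" | g h P' where "P = add_mset g (add_mset h P')"
    by (metis multiset_cases)
  then have "irreducible (prod_mset P)"
  proof cases
    case 1
    then show ?thesis
      using nonrec \<open>reciprocal r\<close> f_eq by simp
  next
    case 2
    then show ?thesis
      using P by (simp add: prime_elem_imp_irreducible)
  next
    case 3
    then have "f = g * h * (prod_mset P' * r)"
      using f_eq by (simp add: mult_ac)
    then show ?thesis
      using not_reflect_rigid_if_two_nonreciprocal_factors f0 P 3 rigid by auto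
  qed
  then show ?thesis
    using \<open>f \<noteq> 0\<close> by (simp add: nonrec_part_def P_def irreducible_mult_unit_left)
qed

lemma not_reciprocal_indicator_poly_if_B3_set:
  assumes "finite B" "0 \<in> B" "3 \<le> card B" "B3_set B"
  shows "\<not> reciprocal (indicator_poly B)"
proof
  have "B \<noteq> {}"
    using assms(2) by auto
  then have "Max B \<in> B"
    using assms(1) by simp
  then have "lead_coeff (indicator_poly B) = 1" "coeff (indicator_poly B) 0 = 1"
    using assms(1,2) by (simp_all add: degree_indicator_poly[OF assms(1) \<open>B \<noteq> {}\<close>] coeff_indicator_poly)
  moreover assume "reciprocal (indicator_poly B)"
  ultimately have "reflect_poly (indicator_poly B) = indicator_poly B"
    by (auto simp: reciprocal_iff dest: arg_cong[of _ _ "\<lambda>p. coeff p 0"])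
  then have "reflect_set B = B"
    using indicator_poly_inject[OF finite_reflect_set assms(1)] assms(1)
    by (simp add: reflect_indicator_poly[OF assms(1) \<open>B \<noteq> {}\<close>])
  then show False
    using reflect_set_neq_if_B3_set[OF assms] by contradiction
qed

lemma irreducible_nonrec_part_F_poly_if_B3_set:
  assumes "finite S" "0 \<notin> S" "2 \<le> card S" "B3_set (insert 0 S)"
  shows "irreducible (nonrec_part (F_poly S))"
proof -
  have "3 \<le> card (insert 0 S)"
    using assms(1-3) by simp
  then show ?thesis
    unfolding F_poly_eq_indicator_poly[OF assms(1,2)] using assms(1,4)
    by (intro irreducible_nonrec_part_if_reflect_rigid not_reciprocal_indicator_poly_if_B3_set
        reflect_rigid_indicator_poly_if_B3_set) (auto simp: coeff_indicator_poly)
qed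

section \<open>Counting sets that are not B_3 sets\<close>

definition lists3 :: "nat set \<Rightarrow> nat list set" where
  "lists3 D = {L. set L \<subseteq> D \<and> length L = 3}"

lemma card_lists3: "finite D \<Longrightarrow> card (lists3 D) = card D ^ 3"
  by (simp add: lists3_def card_lists_length_eq)

lemma finite_lists3: "finite D \<Longrightarrow> finite (lists3 D)"
  by (simp add: lists3_def finite_lists_length_eq)

lemma sum_mset_eq_sum_list_lists3:
  fixes X :: "nat multiset"
  assumes "size X \<le> 3" "set_mset X \<subseteq> D" "0 \<in> D"
  obtains L where "L \<in> lists3 D" "sum_list L = sum_mset X"
proof -
  define L where "L = sorted_list_of_multiset (X + replicate_mset (3 - size X) 0)"
  have "mset L = X + replicate_mset (3 - size X) 0"
    by (simp add: L_def)
  then have "set L \<subseteq> D" "length L = 3" "sum_list L = sum_mset X"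
    using assms by (auto simp flip: set_mset_mset size_mset sum_mset_sum_list)
  then show ?thesis
    using that by (simp add: lists3_def)
qed

text \<open>A triple (c, L1, L2) stands for the relation c v + sum L1 = sum L2, from which v is
  recovered by solve_violation.\<close>

definition violation_triples :: "nat set \<Rightarrow> (nat \<times> nat list \<times> nat list) set" where
  "violation_triples T = {1, 2, 3} \<times> lists3 (insert 0 T) \<times> lists3 (insert 0 T)"

definition solve_violation :: "nat \<times> nat list \<times> nat list \<Rightarrow> nat" where
  "solve_violation = (\<lambda>(c, L1, L2). (sum_list L2 - sum_list L1) div c)"

lemma card_violation_triples:
  "finite T \<Longrightarrow> card (violation_triples T) = 3 * card (insert 0 T) ^ 6"
  by (simp add: violation_triples_def card_cartesian_product card_lists3 flip: power_add)

lemma finite_violation_triples: "finite T \<Longrightarrow> finite (violation_triples T)"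
  by (simp add: violation_triples_def finite_lists3)

lemma B3_violation_oriented:
  fixes X Y :: "nat multiset"
  assumes X: "set_mset X \<subseteq> insert 0 S" "size X = 3" and Y: "set_mset Y \<subseteq> insert 0 S" "size Y = 3"
    and sum: "sum_mset X = sum_mset Y" and "v \<noteq> 0" and less: "count Y v < count X v"
  shows "\<exists>t\<in>violation_triples (S - {v}). solve_violation t = v"
proof -
  have split: "sum_mset M = count M v * v + sum_mset (filter_mset (\<lambda>u. u \<noteq> v) M)" for M
    by (subst multiset_partition[of M "\<lambda>u. u = v"]) (simp add: filter_eq_replicate_mset)
  have "set_mset (filter_mset (\<lambda>u. u \<noteq> v) M) \<subseteq> insert 0 (S - {v})"
    if "set_mset M \<subseteq> insert 0 S" for M
    using that \<open>v \<noteq> 0\<close> by auto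
  then obtain L1 L2 where L: "L1 \<in> lists3 (insert 0 (S - {v}))" "L2 \<in> lists3 (insert 0 (S - {v}))"
    and "sum_list L1 = sum_mset (filter_mset (\<lambda>u. u \<noteq> v) X)"
    and "sum_list L2 = sum_mset (filter_mset (\<lambda>u. u \<noteq> v) Y)"
    using sum_mset_eq_sum_list_lists3 X Y size_filter_mset_lesseq
    by (metis insertI1)
  then have rel: "(count X v - count Y v) * v + sum_list L1 = sum_list L2"
    using sum split[of X] split[of Y] less by (simp add: diff_mult_distrib)
  moreover have c: "count X v - count Y v \<in> {1, 2, 3}"
    using count_le_size[of X v] X(2) less by auto
  ultimately have "solve_violation (count X v - count Y v, L1, L2) = v"
    by (auto simp: solve_violation_def simp flip: rel)
  then show ?thesis
    using c L unfolding violation_triples_def by blast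
qed

lemma B3_violation:
  assumes "0 \<notin> S" "\<not> B3_set (insert 0 S)"
  obtains v t where "v \<in> S" "t \<in> violation_triples (S - {v})" "solve_violation t = v"
proof -
  obtain X Y where X: "set_mset X \<subseteq> insert 0 S" "size X = 3"
    and Y: "set_mset Y \<subseteq> insert 0 S" "size Y = 3"
    and sum: "sum_mset X = sum_mset Y" and "X \<noteq> Y"
    using assms(2) unfolding B3_set_def by blast
  have "\<exists>v. v \<noteq> 0 \<and> count X v \<noteq> count Y v"
  proof (rule ccontr)
    assume "\<not> ?thesis"
    then have same: "count X v = count Y v" if "v \<noteq> 0" for v
      using that by blast
    then have nonzero: "filter_mset (\<lambda>u. u \<noteq> 0) X = filter_mset (\<lambda>u. u \<noteq> 0) Y"
      by (intro multiset_eqI) simp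
    have "size M = count M 0 + size (filter_mset (\<lambda>u. u \<noteq> 0) M)" for M :: "nat multiset"
      by (subst multiset_partition[of M "\<lambda>u. u = 0"]) (simp add: filter_eq_replicate_mset)
    then have "count X 0 = count Y 0"
      using X(2) Y(2) nonzero by (metis add_right_cancel)
    then show False
      using same \<open>X \<noteq> Y\<close> by (metis multiset_eqI)
  qed
  then obtain v where v: "v \<noteq> 0" "count X v \<noteq> count Y v"
    by blast
  then have "v \<in> S"
    using X(1) Y(1) by (metis count_eq_zero_iff insertE subsetD)
  moreover have "\<exists>t\<in>violation_triples (S - {v}). solve_violation t = v"
    using B3_violation_oriented[OF X Y sum v(1)] B3_violation_oriented[OF Y X sum[symmetric] v(1)] v(2)
    by (cases "count Y v < count X v") auto
  ultimately show ?thesis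
    using that by blast
qed

lemma card_subsets_le_power: "card {T. T \<subseteq> {1..N} \<and> card T = j} \<le> N ^ j"
proof -
  have "card {T. T \<subseteq> {1..N} \<and> card T = j} = N choose j"
    using n_subsets[of "{1..N}" j] by simp
  moreover have "N choose j \<le> N ^ j"
    by (cases "j \<le> N") (simp_all add: binomial_le_pow binomial_eq_0)
  ultimately show ?thesis
    by simp
qed

lemma card_UN_image_le:
  assumes "finite I" "\<And>i. i \<in> I \<Longrightarrow> finite (D i)" "\<And>i. i \<in> I \<Longrightarrow> card (D i) \<le> M"
  shows "card (\<Union>i\<in>I. g i ` D i) \<le> card I * M"
proof -
  have "card (\<Union>i\<in>I. g i ` D i) \<le> (\<Sum>i\<in>I. card (g i ` D i))"
    by (rule card_UN_le[OF assms(1)])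
  also have "\<dots> \<le> (\<Sum>i\<in>I. M)"
    using assms(2,3) by (intro sum_mono) (meson card_image_le order_trans)
  finally show ?thesis
    by simp
qed

lemma card_non_B3_sets_le:
  assumes "1 \<le> k"
  shows "card {S. S \<subseteq> {1..N} \<and> card S = k \<and> \<not> B3_set (insert 0 S)} \<le> N ^ (k - 1) * (3 * k ^ 6)"
proof -
  define Ts where "Ts = {T. T \<subseteq> {1..N} \<and> card T = k - 1}"
  have fin_Ts: "finite Ts"
    unfolding Ts_def by (rule finite_subset[of _ "Pow {1..N}"]) auto
  have fin_T: "finite T" if "T \<in> Ts" for T
    using that finite_subset[of T "{1..N}"] by (auto simp: Ts_def)
  have card_triples: "card (violation_triples T) \<le> 3 * k ^ 6" if "T \<in> Ts" for T
  proof -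
    have "card (insert 0 T) \<le> k"
      using that fin_T[OF that] assms by (auto simp: Ts_def card_insert_if)
    then show ?thesis
      using fin_T[OF that] by (simp add: card_violation_triples power_mono)
  qed
  have cover: "{S. S \<subseteq> {1..N} \<and> card S = k \<and> \<not> B3_set (insert 0 S)}
      \<subseteq> (\<Union>T\<in>Ts. (\<lambda>t. insert (solve_violation t) T) ` violation_triples T)"
  proof
    fix S assume "S \<in> {S. S \<subseteq> {1..N} \<and> card S = k \<and> \<not> B3_set (insert 0 S)}"
    then have S: "S \<subseteq> {1..N}" "card S = k" "\<not> B3_set (insert 0 S)" "finite S" "0 \<notin> S"
      using finite_subset by auto
    then obtain v t where "v \<in> S" "t \<in> violation_triples (S - {v})" "solve_violation t = v"
      using B3_violation by blast
    moreover have "S - {v} \<in> Ts"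
      using S \<open>v \<in> S\<close> by (auto simp: Ts_def)
    ultimately show "S \<in> (\<Union>T\<in>Ts. (\<lambda>t. insert (solve_violation t) T) ` violation_triples T)"
      by (intro UN_I[of "S - {v}"] image_eqI[of S _ t]) auto
  qed
  have "card {S. S \<subseteq> {1..N} \<and> card S = k \<and> \<not> B3_set (insert 0 S)}
      \<le> card (\<Union>T\<in>Ts. (\<lambda>t. insert (solve_violation t) T) ` violation_triples T)"
    using fin_Ts fin_T by (intro card_mono[OF _ cover]) (auto intro: finite_violation_triples)
  also have "\<dots> \<le> card Ts * (3 * k ^ 6)"
    using fin_T by (intro card_UN_image_le[OF fin_Ts] finite_violation_triples card_triples)
  also have "\<dots> \<le> N ^ (k - 1) * (3 * k ^ 6)"
    using card_subsets_le_power by (simp add: Ts_def)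
  finally show ?thesis .
qed

theorem lemma1:
  fixes k :: nat
  assumes "k \<ge> 2"
  shows "\<exists>C::real. \<forall>N::nat.
    real (card {S. S \<subseteq> {1..N} \<and> card S = k \<and> \<not> irreducible (nonrec_part (F_poly S))})
      \<le> C * real N ^ (k - 1)"
proof (intro exI allI)
  fix N :: nat
  let ?bad = "{S. S \<subseteq> {1..N} \<and> card S = k \<and> \<not> irreducible (nonrec_part (F_poly S))}"
  let ?non_B3 = "{S. S \<subseteq> {1..N} \<and> card S = k \<and> \<not> B3_set (insert 0 S)}"
  have "\<not> B3_set (insert 0 S)" if "S \<in> ?bad" for S
  proof
    assume "B3_set (insert 0 S)"
    moreover have "finite S" "0 \<notin> S"
      using that finite_subset by auto
    ultimately show False
      using irreducible_nonrec_part_F_poly_if_B3_set that assms by auto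
  qed
  then have "?bad \<subseteq> ?non_B3"
    by blast
  moreover have "finite ?non_B3"
    by (rule finite_subset[of _ "Pow {1..N}"]) auto
  ultimately have "card ?bad \<le> card ?non_B3"
    by (rule card_mono[rotated])
  also have "\<dots> \<le> N ^ (k - 1) * (3 * k ^ 6)"
    using assms by (intro card_non_B3_sets_le) simp
  finally have "real (card ?bad) \<le> real (N ^ (k - 1) * (3 * k ^ 6))"
    by (simp only: of_nat_le_iff)
  then show "real (card ?bad) \<le> real (3 * k ^ 6) * real N ^ (k - 1)"
    by (simp add: mult.commute)
qed

end
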